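(* For every fixed $\theta\in\mathbb R$, the map $\tau\mapsto s_1(\theta,\tau)=\mathbb E[Q\mid\Theta=\theta,A(\tau)=1]$ is strictly increasing on $(-x_u,x_q)$.
   Context: Setup. Let $Q\in\{0,1\}$ be a random variable with $\mathbb P(Q=1)=\pi\in(0,1)$, and let $(\Theta,\Gamma)$ be a real-valued random vector whose conditional joint density given $Q=1$ is $h_q(\theta,\gamma)$ and given $Q=0$ is $h_u(\theta,\gamma)$, both strictly positive on $\mathbb R^2$. Monotone likelihood ratio assumption: $l(\theta,\gamma)=h_q(\theta,\gamma)/h_u(\theta,\gamma)$ is continuous and strictly increasing in each of $\theta$ and $\gamma$, and for each $\theta$ the map $\gamma\mapsto l(\theta,\gamma)$ has infimum $0$ and supremum $+\infty$. Fix payoffs $x_q>0$, $x_u>0$. For $\tau\in(-x_u,x_q)$ let $A(\tau)=\mathbb 1\{l(\Theta,\Gamma)>\frac{(1-\pi)(x_u+\tau)}{\pi(x_q-\tau)}\}$. Define $s_1(\theta,\tau)=\mathbb E[Q\mid\Theta=\theta,A(\tau)=1]$. *)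

theory Defs
  imports "HOL-Analysis.Analysis"
begin

definition lik_ratio :: "(real \<Rightarrow> real \<Rightarrow> real) \<Rightarrow> (real \<Rightarrow> real \<Rightarrow> real) \<Rightarrow> real \<Rightarrow> real \<Rightarrow> real" where
  "lik_ratio hq hu \<theta> \<gamma> = hq \<theta> \<gamma> / hu \<theta> \<gamma>"

definition threshold :: "real \<Rightarrow> real \<Rightarrow> real \<Rightarrow> real \<Rightarrow> real" where
  "threshold \<pi> xq xu \<tau> = (1 - \<pi>) * (xu + \<tau>) / (\<pi> * (xq - \<tau>))"

text \<open>s_1(theta,tau) = E[Q | Theta = theta, A(tau) = 1], computed by Bayes' rule from the
  joint conditional densities: the conditional probability of Q = 1 given Theta = theta and
  l(theta,Gamma) > threshold.\<close>
definition s1 :: "real \<Rightarrow> (real \<Rightarrow> real \<Rightarrow> real) \<Rightarrow> (real \<Rightarrow> real \<Rightarrow> real) \<Rightarrow> real \<Rightarrow> real \<Rightarrow> real \<Rightarrow> real \<Rightarrow> real" where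
  "s1 \<pi> hq hu xq xu \<theta> \<tau> =
     (let c = threshold \<pi> xq xu \<tau>;
          Sq = (LINT \<gamma>|lborel. indicator {g. lik_ratio hq hu \<theta> g > c} \<gamma> * hq \<theta> \<gamma>);
          Su = (LINT \<gamma>|lborel. indicator {g. lik_ratio hq hu \<theta> g > c} \<gamma> * hu \<theta> \<gamma>)
      in \<pi> * Sq / (\<pi> * Sq + (1 - \<pi>) * Su))"

end

theory Submission
  imports Defs
begin

text \<open>Fix \<open>\<theta>\<close> and write \<open>L = l(\<theta>,\<cdot>)\<close>. Being continuous, strictly increasing and
  ranging over \<open>(0,\<infinity>)\<close>, \<open>L\<close> meets each positive threshold at exactly one point \<open>g\<close>,
  so given \<open>\<Theta> = \<theta>\<close> the event \<open>A(\<tau>) = 1\<close> is \<open>\<Gamma> > g\<close>, and \<open>g\<close> increases with \<open>\<tau>\<close>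
  because the threshold does. By Bayes' rule \<open>s\<^sub>1\<close> is an increasing function of the ratio of
  the tail masses \<open>\<integral>\<^sub>g\<^sup>\<infinity> h\<^sub>q / \<integral>\<^sub>g\<^sup>\<infinity> h\<^sub>u\<close>. Moving the cut-off from \<open>a\<close> to \<open>b > a\<close>
  discards the slab \<open>(a,b]\<close>, on which \<open>h\<^sub>q \<le> L(b) h\<^sub>u\<close>, while \<open>h\<^sub>q > L(b) h\<^sub>u\<close> on the
  remaining tail; by the mediant inequality the ratio strictly increases.\<close>

lemma integral_indicator_mult_pos:
  fixes k :: "'a \<Rightarrow> real"
  assumes "integrable M (\<lambda>x. indicator S x * k x)" and "S \<in> sets M"
    and "emeasure M S \<noteq> 0" and pos: "\<And>x. x \<in> S \<Longrightarrow> 0 < k x"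
  shows "0 < (LINT x|M. indicator S x * k x)"
proof -
  have nonneg: "\<And>x. 0 \<le> indicator S x * k x"
    by (simp add: indicator_def less_imp_le pos)
  have "{x \<in> space M. indicator S x * k x \<noteq> 0} = S"
    using pos sets.sets_into_space[OF assms(2)] by (force simp: indicator_def)
  then have "\<not> (AE x in M. indicator S x * k x = 0)"
    using AE_iff_measurable[OF assms(2)] assms(3) by simp
  then have "(LINT x|M. indicator S x * k x) \<noteq> 0"
    using integral_nonneg_eq_0_iff_AE[OF assms(1)] nonneg by simp
  moreover have "0 \<le> (LINT x|M. indicator S x * k x)"
    by (rule integral_nonneg_AE) (simp add: nonneg)
  ultimately show ?thesis by simp
qed

lemma emeasure_lborel_Ioi_neq_0: "emeasure lborel {(b::real)<..} \<noteq> 0"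
proof -
  have "emeasure lborel {b<..b+1} \<le> emeasure lborel {b<..}"
    by (rule emeasure_mono) auto
  then show ?thesis by auto
qed

lemma continuous_unbounded_above_attains:
  fixes L :: "real \<Rightarrow> real"
  assumes "continuous_on UNIV L" and "L g\<^sub>1 < c" and "\<not> bdd_above (range L)"
  shows "\<exists>g. L g = c"
proof -
  obtain g\<^sub>2 where "c \<le> L g\<^sub>2"
    using assms(3) by (meson bdd_aboveI2 linorder_le_cases)
  then have "c \<in> range L"
    using connectedD_interval[OF connected_continuous_image[OF assms(1) connected_UNIV]]
      assms(2) by (metis less_imp_le rangeI)
  then show ?thesis by auto
qed

lemma threshold_pos:
  assumes "0 < p" "p < 1" "-xu < \<tau>" "\<tau> < xq"
  shows "0 < threshold p xq xu \<tau>"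
  unfolding threshold_def using assms by (intro divide_pos_pos mult_pos_pos) auto

lemma threshold_strict_mono_on:
  assumes "0 < p" "p < 1"
  shows "strict_mono_on {-xu<..<xq} (threshold p xq xu)"
proof (rule strict_mono_onI)
  fix r s assume "r \<in> {-xu<..<xq}" "s \<in> {-xu<..<xq}" "r < s"
  moreover have "(1 - p) * (xu + s) * (p * (xq - r)) - (1 - p) * (xu + r) * (p * (xq - s))
      = (1 - p) * p * ((s - r) * (xu + xq))"
    by (simp add: algebra_simps)
  ultimately have "(1 - p) * (xu + r) * (p * (xq - s)) < (1 - p) * (xu + s) * (p * (xq - r))"
    using assms by (smt (verit) mult_pos_pos greaterThanLessThan_iff)
  then show "threshold p xq xu r < threshold p xq xu s"
    unfolding threshold_def using assms \<open>r \<in> _\<close> \<open>s \<in> _\<close> by (simp add: field_simps)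
qed

lemma mediant_less:
  fixes a\<^sub>1 a\<^sub>2 b\<^sub>1 b\<^sub>2 l :: real
  assumes "0 < a\<^sub>2" "0 < b\<^sub>2" "a\<^sub>1 \<le> l * a\<^sub>2" "l * b\<^sub>2 < b\<^sub>1"
  shows "(a\<^sub>1 + b\<^sub>1) / (a\<^sub>2 + b\<^sub>2) < b\<^sub>1 / b\<^sub>2"
proof -
  have "a\<^sub>1 * b\<^sub>2 \<le> l * a\<^sub>2 * b\<^sub>2" using assms by (simp add: mult_right_mono)
  also have "\<dots> < b\<^sub>1 * a\<^sub>2" using assms by (simp add: mult.commute mult.left_commute)
  finally show ?thesis using assms by (simp add: field_simps)
qed

lemma posterior_less:
  fixes p a b c d :: real
  assumes "0 < p" "p < 1" "0 \<le> a" "0 < b" "0 \<le> c" "0 < d" "a / b < c / d"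
  shows "p * a / (p * a + (1 - p) * b) < p * c / (p * c + (1 - p) * d)"
proof -
  have "a * d < c * b" using assms by (simp add: field_simps)
  then have "p * (1 - p) * (a * d) < p * (1 - p) * (c * b)"
    using assms by (intro mult_strict_left_mono) auto
  moreover have "0 < p * a + (1 - p) * b" "0 < p * c + (1 - p) * d"
    using assms by (simp_all add: add_nonneg_pos)
  ultimately show ?thesis by (simp add: field_simps)
qed

lemma integrable_indicator_mult:
  fixes k :: "real \<Rightarrow> real"
  assumes "integrable lborel k" "S \<in> sets lborel"
  shows "integrable lborel (\<lambda>x. indicator S x * k x)"
  using integrable_mult_indicator[OF assms(2,1)] by simp

lemma tail_integral_pos:
  fixes k :: "real \<Rightarrow> real"
  assumes "integrable lborel k" "\<And>x. 0 < k x"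
  shows "0 < (LINT x|lborel. indicator {a<..} x * k x)"
  using assms emeasure_lborel_Ioi_neq_0
  by (intro integral_indicator_mult_pos integrable_indicator_mult) auto

lemma tail_integral_split:
  fixes k :: "real \<Rightarrow> real"
  assumes "integrable lborel k" "a \<le> b"
  shows "(LINT x|lborel. indicator {a<..} x * k x) =
    (LINT x|lborel. indicator {a<..b} x * k x) + (LINT x|lborel. indicator {b<..} x * k x)"
proof -
  have "\<And>x. indicator {a<..} x * k x = indicator {a<..b} x * k x + indicator {b<..} x * k x"
    using assms(2) by (auto split: split_indicator)
  then show ?thesis
    by (simp add: Bochner_Integration.integral_add integrable_indicator_mult assms(1))
qed

lemma tail_ratio_strict_mono:
  fixes f h L :: "real \<Rightarrow> real"
  assumes f: "integrable lborel f" and h: "integrable lborel h"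
    and h_pos: "\<And>x. 0 < h x" and f_eq: "\<And>x. f x = L x * h x"
    and L: "strict_mono L" and "a < b"
  shows "(LINT x|lborel. indicator {a<..} x * f x) / (LINT x|lborel. indicator {a<..} x * h x)
    < (LINT x|lborel. indicator {b<..} x * f x) / (LINT x|lborel. indicator {b<..} x * h x)"
proof -
  define A\<^sub>f where "A\<^sub>f = (LINT x|lborel. indicator {a<..b} x * f x)"
  define A\<^sub>h where "A\<^sub>h = (LINT x|lborel. indicator {a<..b} x * h x)"
  define B\<^sub>f where "B\<^sub>f = (LINT x|lborel. indicator {b<..} x * f x)"
  define B\<^sub>h where "B\<^sub>h = (LINT x|lborel. indicator {b<..} x * h x)"
  have "0 < A\<^sub>h"
    unfolding A\<^sub>h_def using \<open>a < b\<close>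
    by (intro integral_indicator_mult_pos integrable_indicator_mult h) (auto simp: h_pos)
  moreover have "0 < B\<^sub>h"
    unfolding B\<^sub>h_def using h h_pos by (rule tail_integral_pos)
  moreover have "A\<^sub>f \<le> L b * A\<^sub>h"
  proof -
    have "A\<^sub>f \<le> (LINT x|lborel. L b * (indicator {a<..b} x * h x))"
      unfolding A\<^sub>f_def
    proof (rule integral_mono)
      fix x
      show "indicator {a<..b} x * f x \<le> L b * (indicator {a<..b} x * h x)"
        using L h_pos[of x] by (auto simp: f_eq strict_mono_less_eq split: split_indicator)
    qed (auto intro!: integrable_indicator_mult f h)
    then show ?thesis unfolding A\<^sub>h_def by simp
  qed
  moreover have "L b * B\<^sub>h < B\<^sub>f"
  proof -
    have "0 < (LINT x|lborel. indicator {b<..} x * (f x - L b * h x))"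
      using L h_pos
      by (intro integral_indicator_mult_pos integrable_indicator_mult
          Bochner_Integration.integrable_diff integrable_mult_right f h)
        (auto simp: f_eq strict_mono_less emeasure_lborel_Ioi_neq_0)
    also have "\<dots> = B\<^sub>f - L b * B\<^sub>h"
      unfolding B\<^sub>f_def B\<^sub>h_def right_diff_distrib mult.left_commute[of _ "L b"]
      by (simp add: Bochner_Integration.integral_diff integrable_indicator_mult f h)
    finally show ?thesis by simp
  qed
  ultimately have "(A\<^sub>f + B\<^sub>f) / (A\<^sub>h + B\<^sub>h) < B\<^sub>f / B\<^sub>h"
    by (rule mediant_less)
  moreover have "(LINT x|lborel. indicator {a<..} x * f x) = A\<^sub>f + B\<^sub>f"
    "(LINT x|lborel. indicator {a<..} x * h x) = A\<^sub>h + B\<^sub>h"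
    unfolding A\<^sub>f_def A\<^sub>h_def B\<^sub>f_def B\<^sub>h_def using \<open>a < b\<close>
    by (simp_all add: tail_integral_split f h)
  ultimately show ?thesis unfolding B\<^sub>f_def B\<^sub>h_def by simp
qed

lemma s1_eq_tail_posterior:
  assumes "strict_mono (lik_ratio hq hu \<theta>)" "lik_ratio hq hu \<theta> g = threshold \<pi> xq xu \<tau>"
  shows "s1 \<pi> hq hu xq xu \<theta> \<tau> =
    \<pi> * (LINT x|lborel. indicator {g<..} x * hq \<theta> x) /
      (\<pi> * (LINT x|lborel. indicator {g<..} x * hq \<theta> x)
        + (1 - \<pi>) * (LINT x|lborel. indicator {g<..} x * hu \<theta> x))"
proof -
  have "{x. threshold \<pi> xq xu \<tau> < lik_ratio hq hu \<theta> x} = {g<..}"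
    using assms(1) unfolding assms(2)[symmetric] by (auto simp: strict_mono_less)
  then show ?thesis by (simp add: s1_def Let_def)
qed

theorem mainTheorem3:
  fixes \<pi> xq xu \<theta> :: real and hq hu :: "real \<Rightarrow> real \<Rightarrow> real"
  assumes pi: "0 < \<pi>" "\<pi> < 1"
    and pay: "0 < xq" "0 < xu"
    and hq_pos: "\<And>t g. 0 < hq t g" and hu_pos: "\<And>t g. 0 < hu t g"
    and hq_dens: "integrable lborel (\<lambda>z::real \<times> real. hq (fst z) (snd z))"
                 "(LINT z|lborel. hq (fst z) (snd z)) = 1"
    and hu_dens: "integrable lborel (\<lambda>z::real \<times> real. hu (fst z) (snd z))"
                 "(LINT z|lborel. hu (fst z) (snd z)) = 1"
    and hq_sec: "\<And>t. integrable lborel (hq t)"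
    and hu_sec: "\<And>t. integrable lborel (hu t)"
    and l_cont: "continuous_on UNIV (\<lambda>z::real \<times> real. lik_ratio hq hu (fst z) (snd z))"
    and l_mono1: "\<And>g. strict_mono (\<lambda>t. lik_ratio hq hu t g)"
    and l_mono2: "\<And>t. strict_mono (lik_ratio hq hu t)"
    and l_inf: "\<And>t. (INF g. lik_ratio hq hu t g) = 0"
    and l_sup: "\<And>t. \<not> bdd_above (range (lik_ratio hq hu t))"
  shows "strict_mono_on {-xu<..<xq} (s1 \<pi> hq hu xq xu \<theta>)"
proof -
  let ?L = "lik_ratio hq hu \<theta>"
  have hq_eq: "hq \<theta> x = ?L x * hu \<theta> x" for x
    using hu_pos[of \<theta> x] by (simp add: lik_ratio_def)
  have L_pos: "0 < ?L x" for x
    using hq_pos hu_pos by (simp add: lik_ratio_def)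
  have L_cont: "continuous_on UNIV ?L"
    using continuous_on_compose2[OF l_cont, of UNIV "Pair \<theta>"] by (simp add: continuous_intros)
  have level: "\<exists>g. ?L g = threshold \<pi> xq xu \<tau>" if "\<tau> \<in> {-xu<..<xq}" for \<tau>
  proof -
    have "(INF g. ?L g) < threshold \<pi> xq xu \<tau>"
      using threshold_pos[OF pi] that by (simp add: l_inf)
    moreover have "bdd_below (range ?L)"
      using L_pos by (meson bdd_belowI2 less_imp_le)
    ultimately obtain g\<^sub>1 where "?L g\<^sub>1 < threshold \<pi> xq xu \<tau>"
      by (auto simp: cINF_less_iff)
    then show ?thesis
      using continuous_unbounded_above_attains[OF L_cont _ l_sup] by blast
  qed
  show ?thesis
  proof (rule strict_mono_onI)
    fix r s assume r: "r \<in> {-xu<..<xq}" and s: "s \<in> {-xu<..<xq}" and "r < s"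
    obtain a b where a: "?L a = threshold \<pi> xq xu r" and b: "?L b = threshold \<pi> xq xu s"
      using level[OF r] level[OF s] by blast
    have "a < b"
      using strict_mono_onD[OF threshold_strict_mono_on[OF pi] r s \<open>r < s\<close>] a b l_mono2
      by (metis strict_mono_less)
    then show "s1 \<pi> hq hu xq xu \<theta> r < s1 \<pi> hq hu xq xu \<theta> s"
      unfolding s1_eq_tail_posterior[OF l_mono2 a] s1_eq_tail_posterior[OF l_mono2 b]
      using tail_ratio_strict_mono[OF hq_sec hu_sec hu_pos hq_eq l_mono2]
        tail_integral_pos[OF hq_sec hq_pos] tail_integral_pos[OF hu_sec hu_pos]
      by (intro posterior_less pi less_imp_le) auto
  qed
qed

end
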